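(* Let $F$ be a field and let $R$ be an $F$-algebra generated (as an $F$-algebra) by two principally nilpotent elements $x,y$ such that $x+y$ is not nilpotent. Then $R$ is a local ring satisfying (NK), and its Jacobson radical satisfies $\mathcal J(R)=xR+yR=Rx+Ry$.
   Context: All rings are associative with unit. A right ideal is nil if all its elements are nilpotent. A ring satisfies the condition (NK) if it contains two nil right ideals whose sum is not nil. An element $a$ of a ring $R$ is principally nilpotent if $aR$ is a nil right ideal. A ring is local if it has a unique maximal right ideal. *)

theory Defs
  imports Main "HOL.Modules"
begin

text \<open>Rings are modelled by the type class ring_1 (associative, with unit); the whole
type is the ring R.\<close>

definition is_F_algebra :: "('k::field \<Rightarrow> 'a::ring_1 \<Rightarrow> 'a) \<Rightarrow> bool" where
  "is_F_algebra sc \<longleftrightarrow> module sc \<and>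
     (\<forall>c a b. sc c (a * b) = sc c a * b \<and> sc c (a * b) = a * sc c b)"

definition subalg_gen :: "('k::field \<Rightarrow> 'a::ring_1 \<Rightarrow> 'a) \<Rightarrow> 'a set \<Rightarrow> 'a set" where
  "subalg_gen sc S = \<Inter>{T. S \<subseteq> T \<and> 1 \<in> T \<and> (\<forall>a\<in>T. \<forall>b\<in>T. a + b \<in> T \<and> a * b \<in> T)
                          \<and> (\<forall>c. \<forall>a\<in>T. sc c a \<in> T)}"

definition nilpotent_el :: "'a::ring_1 \<Rightarrow> bool" where
  "nilpotent_el a \<longleftrightarrow> (\<exists>n. a ^ n = 0)"

definition right_ideal :: "'a::ring_1 set \<Rightarrow> bool" where
  "right_ideal I \<longleftrightarrow> 0 \<in> I \<and> (\<forall>a\<in>I. \<forall>b\<in>I. a + b \<in> I) \<and> (\<forall>a\<in>I. - a \<in> I)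
                    \<and> (\<forall>a\<in>I. \<forall>r. a * r \<in> I)"

definition nil_set :: "'a::ring_1 set \<Rightarrow> bool" where
  "nil_set I \<longleftrightarrow> (\<forall>a\<in>I. nilpotent_el a)"

definition nil_right_ideal :: "'a::ring_1 set \<Rightarrow> bool" where
  "nil_right_ideal I \<longleftrightarrow> right_ideal I \<and> nil_set I"

definition set_plus :: "'a::ring_1 set \<Rightarrow> 'a set \<Rightarrow> 'a set" where
  "set_plus I J = {a + b | a b. a \<in> I \<and> b \<in> J}"

definition NK :: "'a::ring_1 itself \<Rightarrow> bool" where
  "NK _ \<longleftrightarrow> (\<exists>I J :: 'a set. nil_right_ideal I \<and> nil_right_ideal J \<and> \<not> nil_set (set_plus I J))"

definition principally_nilpotent :: "'a::ring_1 \<Rightarrow> bool" where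
  "principally_nilpotent a \<longleftrightarrow> nil_right_ideal (range (\<lambda>r. a * r))"

definition maximal_right_ideal :: "'a::ring_1 set \<Rightarrow> bool" where
  "maximal_right_ideal M \<longleftrightarrow> right_ideal M \<and> M \<noteq> UNIV \<and>
     (\<forall>I. right_ideal I \<and> M \<subseteq> I \<longrightarrow> I = M \<or> I = UNIV)"

definition local_ring :: "'a::ring_1 itself \<Rightarrow> bool" where
  "local_ring _ \<longleftrightarrow> (\<exists>!M :: 'a set. maximal_right_ideal M)"

definition jacobson :: "'a::ring_1 itself \<Rightarrow> 'a set" where
  "jacobson _ = \<Inter>{M :: 'a set. maximal_right_ideal M}"

end

theory Submission
  imports Defs
begin

text \<open>Every element of R has the form c + m with c \<in> F and m \<in> xR + yR, because F + (xR + yR)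
is already a subalgebra containing x and y. Since 1 - xa is invertible for every a, the relation
1 = xa + yb would make the nilpotent element yb right invertible; so 1 \<notin> xR + yR, and xR + yR is a
maximal right ideal of codimension one. Conversely every maximal right ideal contains each
element a whose right ideal aR is nil, as 1 - ar is a unit; hence it contains xR + yR and
coincides with it. The same description of R as F + (Rx + Ry) gives xR + yR = Rx + Ry, and
xR, yR witness (NK) because x + y is not nilpotent.\<close>

definition right_span :: "'a::ring_1 \<Rightarrow> 'a \<Rightarrow> 'a set" where
  "right_span x y = {x * r + y * s | r s. True}"

definition left_span :: "'a::ring_1 \<Rightarrow> 'a \<Rightarrow> 'a set" where
  "left_span x y = {r * x + s * y | r s. True}"

definition scalars_plus :: "('k::field \<Rightarrow> 'a::ring_1 \<Rightarrow> 'a) \<Rightarrow> 'a set \<Rightarrow> 'a set" where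
  "scalars_plus sc I = {sc c 1 + a | c a. a \<in> I}"

subsection \<open>Units from nilpotent elements\<close>

lemma one_diff_mult_sum_powers:
  fixes u :: "'a::ring_1"
  shows "(1 - u) * (\<Sum>i<n. u ^ i) = 1 - u ^ n"
proof (induction n)
  case (Suc n)
  have "(1 - u) * (\<Sum>i<Suc n. u ^ i) = (1 - u) * (\<Sum>i<n. u ^ i) + (1 - u) * u ^ n"
    by (simp add: distrib_left)
  also have "\<dots> = 1 - u ^ Suc n"
    using Suc by (simp add: algebra_simps)
  finally show ?case .
qed simp

lemma nilpotent_imp_one_diff_right_invertible:
  fixes u :: "'a::ring_1"
  assumes "nilpotent_el u"
  shows "\<exists>s. (1 - u) * s = 1"
proof -
  from assms obtain n where "u ^ n = 0"
    unfolding nilpotent_el_def by auto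
  then show ?thesis
    using one_diff_mult_sum_powers[of u n] by auto
qed

lemma nilpotent_el_if_trivial:
  assumes "(1::'a::ring_1) = 0"
  shows "nilpotent_el (a::'a)"
proof -
  have "a ^ 1 = 0"
    using assms by (metis mult_1_right mult_zero_right power_one_right)
  then show ?thesis
    unfolding nilpotent_el_def by blast
qed

lemma principally_nilpotent_mult:
  "principally_nilpotent x \<Longrightarrow> nilpotent_el (x * r)"
  unfolding principally_nilpotent_def nil_right_ideal_def nil_set_def by auto

lemma right_ideal_range_mult: "right_ideal (range (\<lambda>r. a * r))"
  unfolding right_ideal_def
proof (intro conjI ballI allI)
  show "0 \<in> range (\<lambda>r. a * r)"
    using rangeI[of "\<lambda>r. a * r" 0] by simp
next
  fix u v assume "u \<in> range (\<lambda>r. a * r)" "v \<in> range (\<lambda>r. a * r)"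
  then show "u + v \<in> range (\<lambda>r. a * r)"
    by (metis (no_types, lifting) distrib_left rangeE rangeI)
next
  fix u assume "u \<in> range (\<lambda>r. a * r)"
  then show "- u \<in> range (\<lambda>r. a * r)"
    by (metis (no_types, lifting) mult_minus_right rangeE rangeI)
next
  fix u t assume "u \<in> range (\<lambda>r. a * r)"
  then show "u * t \<in> range (\<lambda>r. a * r)"
    by (metis (no_types, lifting) mult.assoc rangeE rangeI)
qed

lemma right_ideal_add_principal:
  fixes a :: "'a::ring_1"
  assumes I: "right_ideal I"
  shows "right_ideal {a * r + m | r m. m \<in> I}"
  unfolding right_ideal_def
proof (intro conjI ballI allI)
  have "0 \<in> I" using I unfolding right_ideal_def by blast
  then show "0 \<in> {a * r + m | r m. m \<in> I}"
    by (auto intro!: exI[of _ 0])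
next
  fix u v assume "u \<in> {a * r + m | r m. m \<in> I}" "v \<in> {a * r + m | r m. m \<in> I}"
  then obtain r m r' m' where "u = a * r + m" "v = a * r' + m'" "m \<in> I" "m' \<in> I"
    by auto
  moreover have "u + v = a * (r + r') + (m + m')"
    using calculation by (simp add: algebra_simps)
  ultimately show "u + v \<in> {a * r + m | r m. m \<in> I}"
    using I unfolding right_ideal_def by blast
next
  fix u assume "u \<in> {a * r + m | r m. m \<in> I}"
  then obtain r m where "u = a * r + m" "m \<in> I"
    by auto
  moreover have "- u = a * (- r) + - m"
    using calculation by (simp add: algebra_simps)
  ultimately show "- u \<in> {a * r + m | r m. m \<in> I}"
    using I unfolding right_ideal_def by blast
next
  fix u t assume "u \<in> {a * r + m | r m. m \<in> I}"
  then obtain r m where "u = a * r + m" "m \<in> I"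
    by auto
  moreover have "u * t = a * (r * t) + m * t"
    using calculation by (simp add: algebra_simps)
  ultimately show "u * t \<in> {a * r + m | r m. m \<in> I}"
    using I unfolding right_ideal_def by blast
qed

lemma right_ideal_right_span: "right_ideal (right_span x y)"
proof -
  have "right_span x y = {x * r + m | r m. m \<in> range (\<lambda>s. y * s)}"
    unfolding right_span_def by blast
  then show ?thesis
    using right_ideal_add_principal[OF right_ideal_range_mult] by simp
qed

lemma right_ideal_UNIV_if_one_mem:
  assumes "right_ideal I" and "1 \<in> I"
  shows "I = UNIV"
  using assms unfolding right_ideal_def by (metis UNIV_eq_I mult_1_left)

lemma maximal_right_ideal_mem_if_mult_nilpotent:
  fixes a :: "'a::ring_1"
  assumes M: "maximal_right_ideal M" and nil: "\<And>r. nilpotent_el (a * r)"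
  shows "a \<in> M"
proof (rule ccontr)
  assume "a \<notin> M"
  have M_ideal: "right_ideal M" and "M \<noteq> UNIV"
    using M unfolding maximal_right_ideal_def by auto
  define I where "I = {a * r + m | r m. m \<in> M}"
  have "right_ideal I"
    unfolding I_def using M_ideal by (rule right_ideal_add_principal)
  moreover have "M \<subseteq> I"
  proof
    fix m assume "m \<in> M"
    then have "a * 0 + m \<in> I"
      unfolding I_def by blast
    then show "m \<in> I"
      by simp
  qed
  moreover have "a \<in> I"
  proof -
    have "a * 1 + 0 \<in> I"
      using M_ideal unfolding I_def right_ideal_def by blast
    then show ?thesis
      by simp
  qed
  ultimately have "I = UNIV"
    using M \<open>a \<notin> M\<close> unfolding maximal_right_ideal_def by blast
  then obtain r m where m: "1 = a * r + m" "m \<in> M"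
    unfolding I_def by blast
  obtain s where s: "(1 - a * r) * s = 1"
    using nilpotent_imp_one_diff_right_invertible[OF nil] by blast
  have "m * s \<in> M"
    using M_ideal m(2) unfolding right_ideal_def by blast
  moreover have "m = 1 - a * r"
    using m(1) by (simp add: algebra_simps)
  then have "m * s = 1"
    using s by simp
  ultimately show False
    using right_ideal_UNIV_if_one_mem[OF M_ideal] \<open>M \<noteq> UNIV\<close> by simp
qed

lemma one_not_mem_right_span:
  assumes "(1::'a::ring_1) \<noteq> 0"
    and "principally_nilpotent x" and "principally_nilpotent (y::'a)"
  shows "1 \<notin> right_span x y"
proof
  assume "1 \<in> right_span x y"
  then obtain a b where ab: "1 = x * a + y * b"
    unfolding right_span_def by auto
  obtain s where s: "(1 - x * a) * s = 1"
    using nilpotent_imp_one_diff_right_invertible principally_nilpotent_mult assms(2) by blast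
  have "y * (b * s) = 1"
    using s ab by (metis add_diff_cancel_left' mult.assoc)
  moreover obtain n where "(y * (b * s)) ^ n = 0"
    using principally_nilpotent_mult[OF assms(3)] unfolding nilpotent_el_def by blast
  ultimately show False
    using assms(1) by simp
qed

lemma generators_mem_right_span: "x \<in> right_span x y" "y \<in> right_span x y"
proof -
  have "x = x * 1 + y * 0" "y = x * 0 + y * 1"
    by simp_all
  then show "x \<in> right_span x y" "y \<in> right_span x y"
    unfolding right_span_def by blast+
qed

lemma right_span_subset_maximal_right_ideal:
  assumes "maximal_right_ideal M"
    and "principally_nilpotent x" and "principally_nilpotent y"
  shows "right_span x y \<subseteq> M"
proof
  fix z assume "z \<in> right_span x y"
  then obtain r s where z: "z = x * r + y * s"
    unfolding right_span_def by blast
  have "x * r \<in> M"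
    using principally_nilpotent_mult[OF assms(2), of "r * _"]
    by (intro maximal_right_ideal_mem_if_mult_nilpotent[OF assms(1)]) (simp add: mult.assoc)
  moreover have "y * s \<in> M"
    using principally_nilpotent_mult[OF assms(3), of "s * _"]
    by (intro maximal_right_ideal_mem_if_mult_nilpotent[OF assms(1)]) (simp add: mult.assoc)
  moreover have "right_ideal M"
    using assms(1) unfolding maximal_right_ideal_def by blast
  ultimately show "z \<in> M"
    unfolding z right_ideal_def by blast
qed

lemma NK_if_principally_nilpotent:
  fixes x y :: "'a::ring_1"
  assumes "principally_nilpotent x" and "principally_nilpotent y"
    and "\<not> nilpotent_el (x + y)"
  shows "NK TYPE('a)"
proof -
  have "x * 1 + y * 1 \<in> set_plus (range (\<lambda>r. x * r)) (range (\<lambda>r. y * r))"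
    unfolding set_plus_def by blast
  then have "nil_right_ideal (range (\<lambda>r. x * r)) \<and> nil_right_ideal (range (\<lambda>r. y * r))
      \<and> \<not> nil_set (set_plus (range (\<lambda>r. x * r)) (range (\<lambda>r. y * r)))"
    using assms unfolding principally_nilpotent_def nil_set_def by auto
  then show ?thesis
    unfolding NK_def by blast
qed

lemma mult_left_mem_left_span:
  assumes "a \<in> left_span x y"
  shows "t * a \<in> left_span x y"
proof -
  from assms obtain r s where "a = r * x + s * y"
    unfolding left_span_def by blast
  then have "t * a = (t * r) * x + (t * s) * y"
    by (simp add: algebra_simps)
  then show ?thesis
    unfolding left_span_def by blast
qed

lemma add_mem_left_span:
  assumes "a \<in> left_span x y" and "b \<in> left_span x y"
  shows "a + b \<in> left_span x y"
proof -
  from assms obtain r s r' s' where "a = r * x + s * y" "b = r' * x + s' * y"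
    unfolding left_span_def by blast
  then have "a + b = (r + r') * x + (s + s') * y"
    by (simp add: algebra_simps)
  then show ?thesis
    unfolding left_span_def by blast
qed

lemma generators_mem_left_span: "x \<in> left_span x y" "y \<in> left_span x y" "0 \<in> left_span x y"
proof -
  have "x = 1 * x + 0 * y" "y = 0 * x + 1 * y" "0 = 0 * x + 0 * y"
    by simp_all
  then show "x \<in> left_span x y" "y \<in> left_span x y" "0 \<in> left_span x y"
    unfolding left_span_def by blast+
qed

subsection \<open>Algebras spanned by the unit and a non-unital subalgebra\<close>

context
  fixes sc :: "'k::field \<Rightarrow> 'a::ring_1 \<Rightarrow> 'a"
  assumes alg: "is_F_algebra sc"
begin

interpretation module sc
  using alg unfolding is_F_algebra_def by blast

lemma scale_one_mult: "sc c 1 * a = sc c a"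
  using alg unfolding is_F_algebra_def by (metis mult_1_left)

lemma mult_scale_one: "a * sc c 1 = sc c a"
  using alg unfolding is_F_algebra_def by (metis mult_1_right)

lemma subalg_gen_subset_scalars_plus:
  assumes "S \<subseteq> I" and "0 \<in> I"
    and closed: "\<forall>a\<in>I. \<forall>b\<in>I. a + b \<in> I \<and> a * b \<in> I"
    and scale_closed: "\<forall>c. \<forall>a\<in>I. sc c a \<in> I"
  shows "subalg_gen sc S \<subseteq> scalars_plus sc I"
  unfolding subalg_gen_def
proof (rule Inter_lower, safe)
  show "z \<in> scalars_plus sc I" if "z \<in> S" for z
    using that \<open>S \<subseteq> I\<close> unfolding scalars_plus_def by (force intro: exI[of _ 0])
  show "1 \<in> scalars_plus sc I"
    using \<open>0 \<in> I\<close> unfolding scalars_plus_def by (force intro: exI[of _ 1])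
next
  fix u v assume "u \<in> scalars_plus sc I" "v \<in> scalars_plus sc I"
  then obtain c a d b where u: "u = sc c 1 + a" and v: "v = sc d 1 + b" and "a \<in> I" "b \<in> I"
    unfolding scalars_plus_def by blast
  have "u + v = sc (c + d) 1 + (a + b)"
    unfolding u v by (simp add: algebra_simps scale_left_distrib)
  then show "u + v \<in> scalars_plus sc I"
    unfolding scalars_plus_def using closed \<open>a \<in> I\<close> \<open>b \<in> I\<close> by blast
  have "u * v = sc (c * d) 1 + ((sc c b + sc d a) + a * b)"
    unfolding u v by (simp add: algebra_simps scale_one_mult mult_scale_one)
  then show "u * v \<in> scalars_plus sc I"
    unfolding scalars_plus_def using closed scale_closed \<open>a \<in> I\<close> \<open>b \<in> I\<close> by blast
next
  fix k u assume "u \<in> scalars_plus sc I"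
  then obtain c a where u: "u = sc c 1 + a" and "a \<in> I"
    unfolding scalars_plus_def by blast
  have "sc k u = sc (k * c) 1 + sc k a"
    unfolding u by (simp add: scale_right_distrib)
  then show "sc k u \<in> scalars_plus sc I"
    unfolding scalars_plus_def using scale_closed \<open>a \<in> I\<close> by blast
qed

lemma scalars_plus_right_span:
  assumes "subalg_gen sc {x, y} = UNIV"
  shows "scalars_plus sc (right_span x y) = UNIV"
proof -
  have I: "right_ideal (right_span x y)"
    by (rule right_ideal_right_span)
  then have "0 \<in> right_span x y"
    and "\<forall>a\<in>right_span x y. \<forall>b\<in>right_span x y.
        a + b \<in> right_span x y \<and> a * b \<in> right_span x y"
    unfolding right_ideal_def by blast+
  moreover have "\<forall>c. \<forall>a\<in>right_span x y. sc c a \<in> right_span x y"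
  proof (intro allI ballI)
    fix c a assume "a \<in> right_span x y"
    then have "a * sc c 1 \<in> right_span x y"
      using I unfolding right_ideal_def by blast
    then show "sc c a \<in> right_span x y"
      by (simp only: mult_scale_one)
  qed
  moreover have "{x, y} \<subseteq> right_span x y"
    using generators_mem_right_span by blast
  ultimately have "subalg_gen sc {x, y} \<subseteq> scalars_plus sc (right_span x y)"
    by (intro subalg_gen_subset_scalars_plus)
  with assms show ?thesis by auto
qed

lemma scalars_plus_left_span:
  assumes "subalg_gen sc {x, y} = UNIV"
  shows "scalars_plus sc (left_span x y) = UNIV"
proof -
  have "\<forall>a\<in>left_span x y. \<forall>b\<in>left_span x y. a + b \<in> left_span x y \<and> a * b \<in> left_span x y"
    by (blast intro: add_mem_left_span mult_left_mem_left_span)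
  moreover have "\<forall>c. \<forall>a\<in>left_span x y. sc c a \<in> left_span x y"
  proof (intro allI ballI)
    fix c a assume "a \<in> left_span x y"
    then show "sc c a \<in> left_span x y"
      using mult_left_mem_left_span[of a x y "sc c 1"] by (simp only: scale_one_mult)
  qed
  moreover have "{x, y} \<subseteq> left_span x y"
    using generators_mem_left_span by blast
  ultimately have "subalg_gen sc {x, y} \<subseteq> scalars_plus sc (left_span x y)"
    using generators_mem_left_span(3) by (intro subalg_gen_subset_scalars_plus)
  with assms show ?thesis by auto
qed

lemma left_span_subset_right_span:
  assumes "scalars_plus sc (right_span x y) = UNIV"
  shows "left_span x y \<subseteq> right_span x y"
proof -
  have I: "right_ideal (right_span x y)"
    by (rule right_ideal_right_span)
  have mult_left: "r * a \<in> right_span x y" if a: "a \<in> right_span x y" for r a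
  proof -
    obtain c m where "r = sc c 1 + m" and m: "m \<in> right_span x y"
      using assms unfolding scalars_plus_def by blast
    then have "r * a = a * sc c 1 + m * a"
      by (simp add: distrib_right scale_one_mult mult_scale_one)
    then show ?thesis
      using I a m unfolding right_ideal_def by metis
  qed
  show ?thesis
  proof
    fix z assume "z \<in> left_span x y"
    then obtain r s where "z = r * x + s * y"
      unfolding left_span_def by blast
    then show "z \<in> right_span x y"
      using I mult_left generators_mem_right_span unfolding right_ideal_def by metis
  qed
qed

lemma right_span_subset_left_span:
  assumes "scalars_plus sc (left_span x y) = UNIV"
  shows "right_span x y \<subseteq> left_span x y"
proof -
  have mult_right: "a * r \<in> left_span x y" if a: "a \<in> left_span x y" for r a
  proof -
    obtain c m where "r = sc c 1 + m" and m: "m \<in> left_span x y"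
      using assms unfolding scalars_plus_def by blast
    then have "a * r = sc c 1 * a + a * m"
      by (simp add: distrib_left scale_one_mult mult_scale_one)
    then show ?thesis
      using a m by (metis add_mem_left_span mult_left_mem_left_span)
  qed
  show ?thesis
  proof
    fix z assume "z \<in> right_span x y"
    then obtain r s where "z = x * r + y * s"
      unfolding right_span_def by blast
    then show "z \<in> left_span x y"
      using mult_right generators_mem_left_span add_mem_left_span by metis
  qed
qed

lemma maximal_right_ideal_if_scalars_plus:
  assumes M: "right_ideal M" and "1 \<notin> M" and M_UNIV: "scalars_plus sc M = UNIV"
  shows "maximal_right_ideal M"
  unfolding maximal_right_ideal_def
proof (intro conjI allI impI)
  show "right_ideal M" by (rule M)
  show "M \<noteq> UNIV" using \<open>1 \<notin> M\<close> by blast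
next
  fix I assume I: "right_ideal I \<and> M \<subseteq> I"
  show "I = M \<or> I = UNIV"
  proof (cases "I \<subseteq> M")
    case False
    then obtain z where "z \<in> I" "z \<notin> M" by blast
    moreover obtain c m where z: "z = sc c 1 + m" and "m \<in> M"
      using M_UNIV unfolding scalars_plus_def by blast
    ultimately have "c \<noteq> 0"
      by auto
    have "sc c 1 = z + - m"
      using z by simp
    moreover have "- m \<in> I"
      using I \<open>m \<in> M\<close> unfolding right_ideal_def by blast
    ultimately have "sc c 1 \<in> I"
      using I \<open>z \<in> I\<close> unfolding right_ideal_def by metis
    then have "sc c 1 * sc (inverse c) 1 \<in> I"
      using I unfolding right_ideal_def by blast
    moreover have "sc c 1 * sc (inverse c) 1 = 1"
      using \<open>c \<noteq> 0\<close> by (simp add: scale_one_mult)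
    ultimately show ?thesis
      using I right_ideal_UNIV_if_one_mem by metis
  qed (use I in blast)
qed

end

theorem mainTheorem5:
  fixes sc :: "'k::field \<Rightarrow> 'a::ring_1 \<Rightarrow> 'a" and x y :: 'a
  assumes "is_F_algebra sc"
    and "subalg_gen sc {x, y} = UNIV"
    and "principally_nilpotent x" and "principally_nilpotent y"
    and "\<not> nilpotent_el (x + y)"
  shows "local_ring TYPE('a) \<and> NK TYPE('a)
    \<and> jacobson TYPE('a) = {x * r + y * s | r s. True}
    \<and> {x * r + y * s | r s. True} = {r * x + s * y | r s. True}"
proof -
  note alg = assms(1) and gen = assms(2) and pnx = assms(3) and pny = assms(4)
  have "(1::'a) \<noteq> 0"
    using assms(5) nilpotent_el_if_trivial by blast
  then have maximal: "maximal_right_ideal (right_span x y)"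
    using maximal_right_ideal_if_scalars_plus[OF alg right_ideal_right_span]
      one_not_mem_right_span[OF _ pnx pny] scalars_plus_right_span[OF alg gen] by blast
  have "M = right_span x y" if "maximal_right_ideal M" for M :: "'a set"
    using that maximal right_span_subset_maximal_right_ideal[OF that pnx pny]
    unfolding maximal_right_ideal_def by blast
  then have "local_ring TYPE('a)" and "jacobson TYPE('a) = right_span x y"
    unfolding local_ring_def jacobson_def using maximal by blast+
  moreover have "right_span x y = left_span x y"
    using left_span_subset_right_span[OF alg scalars_plus_right_span[OF alg gen]]
      right_span_subset_left_span[OF alg scalars_plus_left_span[OF alg gen]] by blast
  ultimately show ?thesis
    using NK_if_principally_nilpotent[OF pnx pny assms(5)]
    unfolding right_span_def left_span_def by blast
qed

end
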